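(* Let $0<\mu<1/4$ and $\kappa\in\mathbb{R}$. Let $f(x)=(1+\mu\cos x)^{-2}$, $g(y)=y^2(1-y^2)$, and let $K$ be the Gaussian curvature of the metric $(f(x)+g(y))(dx^2+dy^2)$ on $\mathbb{R}\times[-1,1]$. Let $\gamma(s)=\tfrac12\operatorname{sech}s$, and consider the curve $y(x)=\gamma(\kappa+x+\mu\sin x)$. Define $$I(x):=K_x(x,y(x))\,g(y(x))-K_y(x,y(x))\,f(x)\,y'(x)$$ and, for $L>0$, $$B_L(\kappa):=\int_{-\infty}^{-L}I(x)\,dx+\int_{L}^{\infty}I(x)\,dx .$$ Then $$|B_L(\kappa)|\le 1200\,(1+2e^{2|\kappa|})\,\gamma(L)^2 .$$
   Context: $K_x,K_y$ are the partial derivatives of $K$ in $x$ and $y$. The curve $y=\gamma(\kappa+x+\mu\sin x)$ is a geodesic of this metric lying on the homoclinic connection of the closed geodesic $\{y=0\}$. *)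

theory Defs
  imports "HOL-Analysis.Analysis"
begin

definition ff :: "real \<Rightarrow> real \<Rightarrow> real" where
  "ff \<mu> x = 1 / (1 + \<mu> * cos x)^2"

definition gg :: "real \<Rightarrow> real" where
  "gg y = y^2 * (1 - y^2)"

definition lam :: "real \<Rightarrow> real \<Rightarrow> real \<Rightarrow> real" where
  "lam \<mu> x y = ff \<mu> x + gg y"

text \<open>Gaussian curvature of a conformal metric lambda (dx^2+dy^2):
  K = - (1 / (2 lambda)) * Laplacian (ln lambda).\<close>
definition KK :: "real \<Rightarrow> real \<Rightarrow> real \<Rightarrow> real" where
  "KK \<mu> x y = - (1 / (2 * lam \<mu> x y)) *
     (deriv (\<lambda>t. deriv (\<lambda>s. ln (lam \<mu> s y)) t) x
      + deriv (\<lambda>t. deriv (\<lambda>s. ln (lam \<mu> x s)) t) y)"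

definition KK_x :: "real \<Rightarrow> real \<Rightarrow> real \<Rightarrow> real" where
  "KK_x \<mu> x y = deriv (\<lambda>s. KK \<mu> s y) x"

definition KK_y :: "real \<Rightarrow> real \<Rightarrow> real \<Rightarrow> real" where
  "KK_y \<mu> x y = deriv (\<lambda>s. KK \<mu> x s) y"

definition gam :: "real \<Rightarrow> real" where
  "gam s = 1 / (2 * cosh s)"

definition ycurve :: "real \<Rightarrow> real \<Rightarrow> real \<Rightarrow> real" where
  "ycurve \<mu> \<kappa> x = gam (\<kappa> + x + \<mu> * sin x)"

definition II :: "real \<Rightarrow> real \<Rightarrow> real \<Rightarrow> real" where
  "II \<mu> \<kappa> x = KK_x \<mu> x (ycurve \<mu> \<kappa> x) * gg (ycurve \<mu> \<kappa> x)
      - KK_y \<mu> x (ycurve \<mu> \<kappa> x) * ff \<mu> x * deriv (ycurve \<mu> \<kappa>) x"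

definition BB :: "real \<Rightarrow> real \<Rightarrow> real \<Rightarrow> real" where
  "BB \<mu> L \<kappa> = (LBINT x:{..-L}. II \<mu> \<kappa> x) + (LBINT x:{L..}. II \<mu> \<kappa> x)"

end

theory Submission
  imports Defs
begin

(*
  For a conformal factor lambda the curvature is
  K = - Lap(lambda) / (2 lambda^2) + |grad lambda|^2 / (2 lambda^3), so for lambda = f(x) + g(y)
  the partials K_x and K_y are explicit rational expressions in lambda and the first three
  derivatives of f and g.  Along the curve 0 < y <= 1/2, hence lambda >= 16/25 and all these
  quantities are bounded: |K_x| <= 64, and |K_y| <= 121 y because g' and g''' vanish at y = 0.
  Together with g(y) <= y^2 and |f y'| <= 4y/3 this gives |I| <= 240 y^2.  Finally
  y(x) = gamma(s) <= exp(-|s|) with |s| >= |x| - |kappa| - mu, so both tails are absolutely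
  integrable and together contribute at most
  240 exp(2|kappa| + 1/2) exp(-2L) <= 1920 exp(2|kappa|) gamma(L)^2, as exp(-L) <= 2 gamma(L).
*)

lemma deriv_deriv_ln:
  fixes h h' :: "real \<Rightarrow> real"
  assumes "open S" "x \<in> S"
    and h: "\<And>t. t \<in> S \<Longrightarrow> (h has_real_derivative h' t) (at t)" "\<And>t. t \<in> S \<Longrightarrow> 0 < h t"
    and h': "(h' has_real_derivative h'') (at x)"
  shows "deriv (\<lambda>t. deriv (\<lambda>s. ln (h s)) t) x = (h'' * h x - (h' x)^2) / (h x)^2"
proof -
  have "\<forall>\<^sub>F t in nhds x. deriv (\<lambda>s. ln (h s)) t = h' t / h t"
    using eventually_nhds_in_open[OF assms(1,2)]
  proof eventually_elim
    case (elim t)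
    with h show ?case by (intro DERIV_imp_deriv) (auto intro!: derivative_eq_intros)
  qed
  then have "deriv (\<lambda>t. deriv (\<lambda>s. ln (h s)) t) x = deriv (\<lambda>t. h' t / h t) x"
    by (rule deriv_cong_ev) simp
  also have "\<dots> = (h'' * h x - (h' x)^2) / (h x)^2"
    using h[OF assms(2)] h' by (intro DERIV_imp_deriv) (auto intro!: derivative_eq_intros simp: power2_eq_square)
  finally show ?thesis .
qed

(* Curvature of l (dx^2 + dy^2) in terms of l, lap = Lap l and grad2 = |grad l|^2, obtained from
   K = - Lap (ln l) / (2 l) and Lap (ln l) = (l Lap l - |grad l|^2) / l^2. *)
definition conformal_curvature :: "real \<Rightarrow> real \<Rightarrow> real \<Rightarrow> real" where
  "conformal_curvature l lap grad2 = - lap / (2 * l^2) + grad2 / (2 * l^3)"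

definition conformal_curvature_deriv ::
    "real \<Rightarrow> real \<Rightarrow> real \<Rightarrow> real \<Rightarrow> real \<Rightarrow> real \<Rightarrow> real" where
  "conformal_curvature_deriv l l' lap lap' grad2 grad2' =
     - lap' / (2 * l^2) + lap * l' / l^3 + grad2' / (2 * l^3) - 3 * grad2 * l' / (2 * l^4)"

lemma conformal_curvature_has_derivative:
  fixes l lap grad2 :: "real \<Rightarrow> real"
  assumes "(l has_real_derivative l') (at x)" "l x \<noteq> 0"
    and "(lap has_real_derivative lap') (at x)" "(grad2 has_real_derivative grad2') (at x)"
  shows "((\<lambda>s. conformal_curvature (l s) (lap s) (grad2 s)) has_real_derivative
           conformal_curvature_deriv (l x) l' (lap x) lap' (grad2 x) grad2') (at x)"
  unfolding conformal_curvature_def conformal_curvature_deriv_def using assms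
  by (auto intro!: derivative_eq_intros) (simp add: divide_simps; algebra)

lemma isCont_conformal_curvature_deriv:
  assumes "isCont l x" "l x \<noteq> 0" "isCont l' x" "isCont lap x" "isCont lap' x"
    "isCont grad2 x" "isCont grad2' x"
  shows "isCont (\<lambda>t. conformal_curvature_deriv (l t) (l' t) (lap t) (lap' t) (grad2 t) (grad2' t)) x"
  unfolding conformal_curvature_deriv_def using assms by (auto intro!: continuous_intros)

lemma abs_mult_le: "\<bar>a\<bar> \<le> A \<Longrightarrow> \<bar>b\<bar> \<le> B \<Longrightarrow> \<bar>a * b\<bar> \<le> A * (B::real)"
  by (simp add: abs_mult mult_mono')

lemma abs_power_le: "\<bar>a\<bar> \<le> A \<Longrightarrow> \<bar>a ^ n\<bar> \<le> (A::real) ^ n"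
  by (simp add: power_abs power_mono)

lemma abs_divide_le: "\<bar>u\<bar> \<le> U \<Longrightarrow> 0 < d \<Longrightarrow> d \<le> D \<Longrightarrow> \<bar>u / D\<bar> \<le> U / (d::real)"
  unfolding abs_divide by (intro frac_le) auto

lemma abs_conformal_curvature_deriv_le:
  fixes l l' lap lap' grad2 grad2' :: real
  assumes m: "0 < m" "m \<le> l"
    and "\<bar>l'\<bar> \<le> dl" "\<bar>lap\<bar> \<le> a" "\<bar>lap'\<bar> \<le> a'" "\<bar>grad2\<bar> \<le> b" "\<bar>grad2'\<bar> \<le> b'"
  shows "\<bar>conformal_curvature_deriv l l' lap lap' grad2 grad2'\<bar>
           \<le> a' / (2 * m^2) + a * dl / m^3 + b' / (2 * m^3) + 3 * b * dl / (2 * m^4)"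
proof -
  have pow: "m^n \<le> l^n" for n using m by (intro power_mono) auto
  have prod: "\<bar>lap * l'\<bar> \<le> a * dl" "\<bar>3 * grad2 * l'\<bar> \<le> 3 * b * dl"
    using assms by (auto simp: abs_mult intro!: mult_mono)
  have "\<bar>lap' / (2 * l^2)\<bar> \<le> a' / (2 * m^2)" "\<bar>lap * l' / l^3\<bar> \<le> a * dl / m^3"
    "\<bar>grad2' / (2 * l^3)\<bar> \<le> b' / (2 * m^3)" "\<bar>3 * grad2 * l' / (2 * l^4)\<bar> \<le> 3 * b * dl / (2 * m^4)"
    using assms prod pow by (auto intro!: abs_divide_le simp del: abs_divide)
  then show ?thesis unfolding conformal_curvature_deriv_def by linarith
qed

lemma set_integrable_exp_tail:
  fixes h :: "real \<Rightarrow> real"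
  assumes cont: "continuous_on UNIV h" and k: "0 < k"
    and bound: "\<And>x. L \<le> x \<Longrightarrow> \<bar>h x\<bar> \<le> M * exp (- k * x)"
  shows "set_integrable lborel {L..} h" "\<bar>LBINT x:{L..}. h x\<bar> \<le> M * exp (- k * L) / k"
proof -
  have major: "((\<lambda>x. M * exp (- k * x)) has_integral M * exp (- k * L) / k) {L..}"
    using has_integral_mult_right[OF has_integral_exp_minus_to_infinity[OF k, of L]] by simp
  then have major_int: "(\<lambda>x. M * exp (- k * x)) integrable_on {L..}" by blast
  have "h \<in> borel_measurable (lebesgue_on {L..})"
    using cont by (intro continuous_imp_measurable_on_sets_lebesgue) (auto intro: continuous_on_subset)
  then have "h absolutely_integrable_on {L..}"
    using bound by (intro measurable_bounded_by_integrable_imp_absolutely_integrable[OF _ _ major_int]) auto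
  moreover have "(\<lambda>x. indicator {L..} x *\<^sub>R h x) \<in> borel_measurable lborel"
    using borel_measurable_continuous_onI[OF cont] by measurable
  ultimately show int: "set_integrable lborel {L..} h"
    unfolding set_integrable_def absolutely_integrable_on_def by (simp add: integrable_completion)
  have "\<bar>LBINT x:{L..}. h x\<bar> = \<bar>integral {L..} h\<bar>"
    by (simp add: set_borel_integral_eq_integral(2)[OF int])
  also have "\<dots> \<le> integral {L..} (\<lambda>x. M * exp (- k * x))"
    using integral_norm_bound_integral[OF set_borel_integral_eq_integral(1)[OF int] major_int] bound
    by simp
  also have "\<dots> = M * exp (- k * L) / k" by (rule integral_unique[OF major])
  finally show "\<bar>LBINT x:{L..}. h x\<bar> \<le> M * exp (- k * L) / k" .
qed

lemma set_integrable_exp_tails: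
  fixes h :: "real \<Rightarrow> real"
  assumes cont: "continuous_on UNIV h" and k: "0 < k" and L: "0 \<le> L"
    and bound: "\<And>x. \<bar>h x\<bar> \<le> M * exp (- k * \<bar>x\<bar>)"
  shows "set_integrable lborel {..-L} h \<and> set_integrable lborel {L..} h
       \<and> \<bar>(LBINT x:{..-L}. h x) + (LBINT x:{L..}. h x)\<bar> \<le> 2 * M * exp (- k * L) / k"
proof -
  have "\<bar>h x\<bar> \<le> M * exp (- k * x)" "\<bar>h (- x)\<bar> \<le> M * exp (- k * x)" if "L \<le> x" for x
    using bound[of x] bound[of "- x"] that L by simp_all
  note bound_right = this(1) and bound_left = this(2)
  have right: "set_integrable lborel {L..} h" "\<bar>LBINT x:{L..}. h x\<bar> \<le> M * exp (- k * L) / k"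
    using set_integrable_exp_tail[OF cont k bound_right] by blast+
  have "continuous_on UNIV (\<lambda>x. h (- x))"
    by (rule continuous_on_compose2[OF cont]) (auto intro: continuous_intros)
  then have left: "set_integrable lborel {L..} (\<lambda>x. h (- x))"
    "\<bar>LBINT x:{L..}. h (- x)\<bar> \<le> M * exp (- k * L) / k"
    using set_integrable_exp_tail[OF _ k bound_left] by blast+
  have "integrable lborel (\<lambda>x. indicator {L..} (- x) *\<^sub>R h x)"
    using lborel_integrable_real_affine[OF left(1)[unfolded set_integrable_def], of "-1" 0] by simp
  moreover have "(\<lambda>x. indicator {L..} (- x) *\<^sub>R h x) = (\<lambda>x. indicator {..-L} x *\<^sub>R h x)"
    by (auto simp: indicator_def)
  ultimately have "set_integrable lborel {..-L} h" unfolding set_integrable_def by simp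
  moreover have "(LBINT x:{..-L}. h x) = (LBINT x:{L..}. h (- x))"
    by (subst set_integral_reflect) (simp add: atLeast_def)
  ultimately show ?thesis using left(2) right by linarith
qed

lemma one_plus_mult_cos_pos: "\<bar>\<mu>\<bar> < 1 \<Longrightarrow> 0 < 1 + \<mu> * cos (x::real)"
proof -
  assume "\<bar>\<mu>\<bar> < 1"
  moreover have "\<bar>\<mu> * cos x\<bar> \<le> \<bar>\<mu>\<bar>"
    using abs_cos_le_one[of x] by (simp add: abs_mult mult_left_le)
  ultimately show ?thesis by linarith
qed

definition ff' :: "real \<Rightarrow> real \<Rightarrow> real" where
  "ff' \<mu> x = 2 * \<mu> * sin x / (1 + \<mu> * cos x)^3"

definition ff'' :: "real \<Rightarrow> real \<Rightarrow> real" where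
  "ff'' \<mu> x = 2 * \<mu> * cos x / (1 + \<mu> * cos x)^3 + 6 * \<mu>^2 * (sin x)^2 / (1 + \<mu> * cos x)^4"

definition ff''' :: "real \<Rightarrow> real \<Rightarrow> real" where
  "ff''' \<mu> x = - 2 * \<mu> * sin x / (1 + \<mu> * cos x)^3 + 18 * \<mu>^2 * sin x * cos x / (1 + \<mu> * cos x)^4
     + 24 * \<mu>^3 * (sin x)^3 / (1 + \<mu> * cos x)^5"

definition gg' :: "real \<Rightarrow> real" where "gg' y = 2 * y - 4 * y^3"

definition gg'' :: "real \<Rightarrow> real" where "gg'' y = 2 - 12 * y^2"

definition gg''' :: "real \<Rightarrow> real" where "gg''' y = - 24 * y"

lemma ff_has_derivative: "\<bar>\<mu>\<bar> < 1 \<Longrightarrow> (ff \<mu> has_real_derivative ff' \<mu> x) (at x)"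
  unfolding ff_def ff'_def using one_plus_mult_cos_pos[of \<mu> x]
  by (auto intro!: derivative_eq_intros) (simp add: divide_simps; algebra)

lemma ff'_has_derivative: "\<bar>\<mu>\<bar> < 1 \<Longrightarrow> (ff' \<mu> has_real_derivative ff'' \<mu> x) (at x)"
  unfolding ff'_def ff''_def using one_plus_mult_cos_pos[of \<mu> x]
  by (auto intro!: derivative_eq_intros) (simp add: divide_simps; algebra)

lemma ff''_has_derivative: "\<bar>\<mu>\<bar> < 1 \<Longrightarrow> (ff'' \<mu> has_real_derivative ff''' \<mu> x) (at x)"
  unfolding ff''_def ff'''_def using one_plus_mult_cos_pos[of \<mu> x]
  by (auto intro!: derivative_eq_intros) (simp add: divide_simps; algebra)

lemma gg_has_derivative: "(gg has_real_derivative gg' y) (at y)"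
  unfolding gg_def gg'_def
  by (auto intro!: derivative_eq_intros simp: algebra_simps power2_eq_square power3_eq_cube)

lemma gg'_has_derivative: "(gg' has_real_derivative gg'' y) (at y)"
  unfolding gg'_def gg''_def by (auto intro!: derivative_eq_intros simp: algebra_simps power2_eq_square)

lemma gg''_has_derivative: "(gg'' has_real_derivative gg''' y) (at y)"
  unfolding gg''_def gg'''_def by (auto intro!: derivative_eq_intros)

lemma ff_pos: "\<bar>\<mu>\<bar> < 1 \<Longrightarrow> 0 < ff \<mu> x"
  unfolding ff_def using one_plus_mult_cos_pos[of \<mu> x] by simp

lemma gg_nonneg: "\<bar>y\<bar> \<le> 1 \<Longrightarrow> 0 \<le> gg y"
  unfolding gg_def by (simp add: abs_square_le_1)

lemma lam_pos: "\<bar>\<mu>\<bar> < 1 \<Longrightarrow> \<bar>y\<bar> \<le> 1 \<Longrightarrow> 0 < lam \<mu> x y"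
  unfolding lam_def using ff_pos[of \<mu> x] gg_nonneg[of y] by simp

lemma lam_has_derivative_x:
  "\<bar>\<mu>\<bar> < 1 \<Longrightarrow> ((\<lambda>s. lam \<mu> s y) has_real_derivative ff' \<mu> x) (at x)"
  unfolding lam_def by (auto intro!: derivative_eq_intros ff_has_derivative)

lemma lam_has_derivative_y: "(lam \<mu> x has_real_derivative gg' y) (at y)"
  unfolding lam_def by (auto intro!: derivative_eq_intros gg_has_derivative)

lemma KK_eq_conformal_curvature:
  assumes \<mu>: "\<bar>\<mu>\<bar> < 1" and y: "\<bar>y\<bar> < 1"
  shows "KK \<mu> x y = conformal_curvature (lam \<mu> x y) (ff'' \<mu> x + gg'' y) ((ff' \<mu> x)^2 + (gg' y)^2)"
proof -
  have x_part: "deriv (\<lambda>t. deriv (\<lambda>s. ln (lam \<mu> s y)) t) x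
      = (ff'' \<mu> x * lam \<mu> x y - (ff' \<mu> x)^2) / (lam \<mu> x y)^2"
    by (rule deriv_deriv_ln[where S = UNIV])
      (use \<mu> y in \<open>auto intro: lam_has_derivative_x ff'_has_derivative lam_pos\<close>)
  have y_part: "deriv (\<lambda>t. deriv (\<lambda>s. ln (lam \<mu> x s)) t) y
      = (gg'' y * lam \<mu> x y - (gg' y)^2) / (lam \<mu> x y)^2"
    by (rule deriv_deriv_ln[where S = "{-1<..<1}"])
      (use \<mu> y in \<open>auto intro: lam_has_derivative_y gg'_has_derivative lam_pos\<close>)
  show ?thesis
    using lam_pos[OF \<mu>, of y x] y unfolding KK_def x_part y_part conformal_curvature_def
    by (simp add: field_simps power2_eq_square power3_eq_cube)
qed

lemma KK_x_eq:
  assumes \<mu>: "\<bar>\<mu>\<bar> < 1" and y: "\<bar>y\<bar> < 1"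
  shows "KK_x \<mu> x y = conformal_curvature_deriv (lam \<mu> x y) (ff' \<mu> x)
           (ff'' \<mu> x + gg'' y) (ff''' \<mu> x) ((ff' \<mu> x)^2 + (gg' y)^2) (2 * ff' \<mu> x * ff'' \<mu> x)"
  unfolding KK_x_def KK_eq_conformal_curvature[OF \<mu> y]
  using lam_pos[OF \<mu>, of y x] y
  by (intro DERIV_imp_deriv conformal_curvature_has_derivative)
    (auto intro!: derivative_eq_intros lam_has_derivative_x ff''_has_derivative ff'_has_derivative \<mu>)

lemma KK_y_eq:
  assumes \<mu>: "\<bar>\<mu>\<bar> < 1" and y: "\<bar>y\<bar> < 1"
  shows "KK_y \<mu> x y = conformal_curvature_deriv (lam \<mu> x y) (gg' y)
           (ff'' \<mu> x + gg'' y) (gg''' y) ((ff' \<mu> x)^2 + (gg' y)^2) (2 * gg' y * gg'' y)"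
proof -
  have "\<forall>\<^sub>F t in nhds y. t \<in> {-1<..<1}"
    using y by (intro eventually_nhds_in_open) auto
  then have "\<forall>\<^sub>F t in nhds y. KK \<mu> x t
      = conformal_curvature (lam \<mu> x t) (ff'' \<mu> x + gg'' t) ((ff' \<mu> x)^2 + (gg' t)^2)"
    by eventually_elim (auto intro: KK_eq_conformal_curvature[OF \<mu>])
  then have "KK_y \<mu> x y = deriv (\<lambda>t. conformal_curvature (lam \<mu> x t)
      (ff'' \<mu> x + gg'' t) ((ff' \<mu> x)^2 + (gg' t)^2)) y"
    unfolding KK_y_def by (rule deriv_cong_ev) simp
  also have "\<dots> = conformal_curvature_deriv (lam \<mu> x y) (gg' y)
      (ff'' \<mu> x + gg'' y) (gg''' y) ((ff' \<mu> x)^2 + (gg' y)^2) (2 * gg' y * gg'' y)"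
    using lam_pos[OF \<mu>, of y x] y
    by (intro DERIV_imp_deriv conformal_curvature_has_derivative)
      (auto intro!: derivative_eq_intros lam_has_derivative_y gg''_has_derivative gg'_has_derivative)
  finally show ?thesis .
qed

lemma one_plus_mult_cos_bounds:
  fixes \<mu> x :: real
  assumes "\<bar>\<mu>\<bar> \<le> 1/4"
  shows "3/4 \<le> 1 + \<mu> * cos x" "1 + \<mu> * cos x \<le> 5/4"
proof -
  have "\<bar>\<mu> * cos x\<bar> \<le> \<bar>\<mu>\<bar>"
    using abs_cos_le_one[of x] by (simp add: abs_mult mult_left_le)
  with assms show "3/4 \<le> 1 + \<mu> * cos x" "1 + \<mu> * cos x \<le> 5/4"
    by (auto simp: abs_le_iff)
qed

lemma ff_lower_bound:
  assumes "\<bar>\<mu>\<bar> \<le> 1/4" shows "16/25 \<le> ff \<mu> x"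
proof -
  have "(1 + \<mu> * cos x)^2 \<le> (5/4)^2"
    using one_plus_mult_cos_bounds[OF assms, of x] by (intro power_mono) auto
  then show ?thesis
    unfolding ff_def using one_plus_mult_cos_bounds[OF assms, of x] by (simp add: divide_simps)
qed

lemma ff_derivs_bounds:
  assumes \<mu>: "\<bar>\<mu>\<bar> \<le> 1/4"
  shows "\<bar>ff' \<mu> x\<bar> \<le> 32/27" "\<bar>ff'' \<mu> x\<bar> \<le> 64/27" "\<bar>ff''' \<mu> x\<bar> \<le> 512/81"
proof -
  define c where "c = 1 + \<mu> * cos x"
  have "(3/4)^n \<le> c^n" for n
    using one_plus_mult_cos_bounds[OF \<mu>] unfolding c_def by (intro power_mono) auto
  from this[of 3] this[of 4] this[of 5]
  have c: "27/64 \<le> c^3" "81/256 \<le> c^4" "243/1024 \<le> c^5"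
    by (simp_all add: power_divide)
  have "\<bar>2 * \<mu> * sin x / c^3\<bar> \<le> 2 * (1/4) * 1 / (27/64)
      \<and> \<bar>2 * \<mu> * cos x / c^3\<bar> \<le> 2 * (1/4) * 1 / (27/64)
      \<and> \<bar>6 * \<mu>^2 * (sin x)^2 / c^4\<bar> \<le> 6 * (1/4)^2 * 1^2 / (81/256)
      \<and> \<bar>18 * \<mu>^2 * sin x * cos x / c^4\<bar> \<le> 18 * (1/4)^2 * 1 * 1 / (81/256)
      \<and> \<bar>24 * \<mu>^3 * (sin x)^3 / c^5\<bar> \<le> 24 * (1/4)^3 * 1^3 / (243/1024)"
    by (intro conjI abs_divide_le abs_mult_le abs_power_le)
      (use \<mu> c in auto)
  then have "\<bar>2 * \<mu> * sin x / c^3\<bar> \<le> 32/27" "\<bar>2 * \<mu> * cos x / c^3\<bar> \<le> 32/27"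
    "\<bar>6 * \<mu>^2 * (sin x)^2 / c^4\<bar> \<le> 32/27" "\<bar>18 * \<mu>^2 * sin x * cos x / c^4\<bar> \<le> 32/9"
    "\<bar>24 * \<mu>^3 * (sin x)^3 / c^5\<bar> \<le> 128/81"
    by (simp_all add: power_divide)
  then show "\<bar>ff' \<mu> x\<bar> \<le> 32/27" "\<bar>ff'' \<mu> x\<bar> \<le> 64/27" "\<bar>ff''' \<mu> x\<bar> \<le> 512/81"
    unfolding ff'_def ff''_def ff'''_def c_def[symmetric] by linarith+
qed

lemma gg_derivs_bounds:
  fixes y :: real
  assumes "0 \<le> y" "y \<le> 1/2"
  shows "gg y \<le> y^2" "\<bar>gg' y\<bar> \<le> 2 * y" "\<bar>gg'' y\<bar> \<le> 2" "\<bar>gg''' y\<bar> \<le> 24 * y"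
proof -
  have y2: "y^2 \<le> 1/4" using power_mono[OF assms(2), of 2] assms(1) by (simp add: power_divide)
  have "y^3 = y * y^2" by (simp add: power2_eq_square power3_eq_cube)
  also have "\<dots> \<le> y / 4" using mult_left_mono[OF y2 assms(1)] by simp
  finally have y3: "y^3 \<le> y / 4" .
  have "0 \<le> y^3" using assms(1) by simp
  with y2 y3 assms show "\<bar>gg' y\<bar> \<le> 2 * y" "\<bar>gg'' y\<bar> \<le> 2" "\<bar>gg''' y\<bar> \<le> 24 * y"
    unfolding gg'_def gg''_def gg'''_def by (auto simp: abs_le_iff)
  show "gg y \<le> y^2" unfolding gg_def by (simp add: mult_left_le)
qed

lemma lam_laplacian_gradient_bounds:
  assumes \<mu>: "\<bar>\<mu>\<bar> \<le> 1/4" and y: "0 \<le> y" "y \<le> 1/2"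
  shows "16/25 \<le> lam \<mu> x y" "\<bar>ff'' \<mu> x + gg'' y\<bar> \<le> 64/27 + 2"
    "\<bar>(ff' \<mu> x)^2 + (gg' y)^2\<bar> \<le> (32/27)^2 + 1^2"
proof -
  note F = ff_derivs_bounds[OF \<mu>, of x] and G = gg_derivs_bounds[OF y]
  show "16/25 \<le> lam \<mu> x y"
    unfolding lam_def using ff_lower_bound[OF \<mu>, of x] gg_nonneg[of y] y by simp
  show "\<bar>ff'' \<mu> x + gg'' y\<bar> \<le> 64/27 + 2" using F G by linarith
  show "\<bar>(ff' \<mu> x)^2 + (gg' y)^2\<bar> \<le> (32/27)^2 + 1^2"
    using abs_power_le[OF F(1), of 2] abs_power_le[of "gg' y" 1 2] G(2) y by simp
qed

lemma abs_KK_x_le: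
  assumes \<mu>: "\<bar>\<mu>\<bar> \<le> 1/4" and y: "0 \<le> y" "y \<le> 1/2"
  shows "\<bar>KK_x \<mu> x y\<bar> \<le> 64"
proof -
  note F = ff_derivs_bounds[OF \<mu>, of x]
  have "\<bar>2 * ff' \<mu> x * ff'' \<mu> x\<bar> \<le> 2 * (32/27) * (64/27)"
    by (intro abs_mult_le) (use F in auto)
  moreover have "\<bar>\<mu>\<bar> < 1" "\<bar>y\<bar> < 1" using \<mu> y by auto
  ultimately have "\<bar>KK_x \<mu> x y\<bar> \<le> (512/81) / (2 * (16/25)^2) + (64/27 + 2) * (32/27) / (16/25)^3
      + 2 * (32/27) * (64/27) / (2 * (16/25)^3) + 3 * ((32/27)^2 + 1^2) * (32/27) / (2 * (16/25)^4)"
    using F lam_laplacian_gradient_bounds[OF \<mu> y, of x]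
    by (simp only: KK_x_eq) (intro abs_conformal_curvature_deriv_le; simp)
  also have "\<dots> \<le> 64" by (simp add: power_divide)
  finally show ?thesis .
qed

lemma abs_KK_y_le:
  assumes \<mu>: "\<bar>\<mu>\<bar> \<le> 1/4" and y: "0 \<le> y" "y \<le> 1/2"
  shows "\<bar>KK_y \<mu> x y\<bar> \<le> 121 * y"
proof -
  note G = gg_derivs_bounds[OF y]
  have "\<bar>2 * gg' y * gg'' y\<bar> \<le> 2 * (2 * y) * 2"
    by (intro abs_mult_le) (use G in auto)
  moreover have "\<bar>\<mu>\<bar> < 1" "\<bar>y\<bar> < 1" using \<mu> y by auto
  ultimately have "\<bar>KK_y \<mu> x y\<bar> \<le> (24 * y) / (2 * (16/25)^2) + (64/27 + 2) * (2 * y) / (16/25)^3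
      + 2 * (2 * y) * 2 / (2 * (16/25)^3) + 3 * ((32/27)^2 + 1^2) * (2 * y) / (2 * (16/25)^4)"
    using G lam_laplacian_gradient_bounds[OF \<mu> y, of x]
    by (simp only: KK_y_eq) (intro abs_conformal_curvature_deriv_le; simp)
  also have "\<dots> \<le> 121 * y" using y by (simp add: power_divide)
  finally show ?thesis .
qed

lemma gam_has_derivative: "(gam has_real_derivative - gam s * tanh s) (at s)"
  unfolding gam_def[abs_def] tanh_def
  by (auto intro!: derivative_eq_intros simp: power2_eq_square field_simps)

lemma gam_exp_bounds: "exp (- \<bar>s\<bar>) / 2 \<le> gam s" "gam s \<le> exp (- \<bar>s\<bar>)"
proof -
  have "exp \<bar>s\<bar> \<le> 2 * cosh s" "cosh s \<le> exp \<bar>s\<bar>"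
    by (cases "0 \<le> s"; simp add: cosh_field_def)+
  then show "exp (- \<bar>s\<bar>) / 2 \<le> gam s" "gam s \<le> exp (- \<bar>s\<bar>)"
    unfolding gam_def exp_minus by (simp_all add: divide_simps)
qed

lemma exp_neg_le_gam_sq: "exp (- 2 * \<bar>s\<bar>) \<le> 4 * (gam s)^2"
proof -
  have "(exp (- \<bar>s\<bar>) / 2)^2 \<le> (gam s)^2"
    using gam_exp_bounds(1) by (intro power_mono) auto
  then show ?thesis by (simp add: power_divide flip: exp_double)
qed

lemma ycurve_bounds: "0 < ycurve \<mu> \<kappa> x" "ycurve \<mu> \<kappa> x \<le> 1/2"
  unfolding ycurve_def gam_def using cosh_real_ge_1 by (auto simp: divide_simps)

lemma ycurve_has_derivative:
  "(ycurve \<mu> \<kappa> has_real_derivative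
     - ycurve \<mu> \<kappa> x * tanh (\<kappa> + x + \<mu> * sin x) * (1 + \<mu> * cos x)) (at x)"
  unfolding ycurve_def[abs_def]
  by (rule DERIV_chain2[OF gam_has_derivative]) (auto intro!: derivative_eq_intros)

lemma ycurve_le_exp: "ycurve \<mu> \<kappa> x \<le> exp (\<bar>\<kappa>\<bar> + \<bar>\<mu>\<bar> - \<bar>x\<bar>)"
proof -
  have "\<bar>\<mu> * sin x\<bar> \<le> \<bar>\<mu>\<bar>" using abs_sin_le_one[of x] by (simp add: abs_mult mult_left_le)
  then have "- \<bar>\<kappa> + x + \<mu> * sin x\<bar> \<le> \<bar>\<kappa>\<bar> + \<bar>\<mu>\<bar> - \<bar>x\<bar>" by linarith
  then have "exp (- \<bar>\<kappa> + x + \<mu> * sin x\<bar>) \<le> exp (\<bar>\<kappa>\<bar> + \<bar>\<mu>\<bar> - \<bar>x\<bar>)" by simp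
  with gam_exp_bounds(2) show ?thesis unfolding ycurve_def by (rule order_trans)
qed

lemma abs_ff_mult_deriv_ycurve_le:
  assumes \<mu>: "\<bar>\<mu>\<bar> \<le> 1/4"
  shows "\<bar>ff \<mu> x * deriv (ycurve \<mu> \<kappa>) x\<bar> \<le> 4/3 * ycurve \<mu> \<kappa> x"
proof -
  define c where "c = 1 + \<mu> * cos x"
  have c: "3/4 \<le> c" using one_plus_mult_cos_bounds[OF \<mu>] unfolding c_def by simp
  have "ff \<mu> x * deriv (ycurve \<mu> \<kappa>) x = - ycurve \<mu> \<kappa> x * tanh (\<kappa> + x + \<mu> * sin x) / c"
    unfolding DERIV_imp_deriv[OF ycurve_has_derivative] ff_def c_def[symmetric]
    using c by (simp add: power2_eq_square)
  also have "\<bar>\<dots>\<bar> \<le> ycurve \<mu> \<kappa> x * 1 / (3/4)"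
    using c ycurve_bounds(1)[of \<mu> \<kappa> x] tanh_real_bounds[of "\<kappa> + x + \<mu> * sin x"]
    by (intro abs_divide_le abs_mult_le) auto
  finally show ?thesis by simp
qed

lemma abs_II_le:
  assumes \<mu>: "\<bar>\<mu>\<bar> \<le> 1/4"
  shows "\<bar>II \<mu> \<kappa> x\<bar> \<le> 240 * (ycurve \<mu> \<kappa> x)^2"
proof -
  define y where "y = ycurve \<mu> \<kappa> x"
  have y: "0 \<le> y" "y \<le> 1/2" using ycurve_bounds[of \<mu> \<kappa> x] unfolding y_def by auto
  have "\<bar>gg y\<bar> \<le> y^2" using gg_derivs_bounds(1)[OF y] gg_nonneg[of y] y by simp
  then have "\<bar>KK_x \<mu> x y * gg y\<bar> \<le> 64 * y^2"
    by (rule abs_mult_le[OF abs_KK_x_le[OF \<mu> y]])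
  moreover have "\<bar>KK_y \<mu> x y * (ff \<mu> x * deriv (ycurve \<mu> \<kappa>) x)\<bar> \<le> (121 * y) * (4/3 * y)"
    using abs_ff_mult_deriv_ycurve_le[OF \<mu>, of x \<kappa>] unfolding y_def[symmetric]
    by (rule abs_mult_le[OF abs_KK_y_le[OF \<mu> y]])
  moreover have "(121 * y) * (4/3 * y) = 484/3 * y^2" by (simp add: power2_eq_square)
  moreover have "II \<mu> \<kappa> x = KK_x \<mu> x y * gg y - KK_y \<mu> x y * (ff \<mu> x * deriv (ycurve \<mu> \<kappa>) x)"
    unfolding II_def y_def by simp
  ultimately show ?thesis unfolding y_def[symmetric] using zero_le_power2[of y] by linarith
qed

lemma abs_II_le_exp:
  assumes \<mu>: "\<bar>\<mu>\<bar> \<le> 1/4"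
  shows "\<bar>II \<mu> \<kappa> x\<bar> \<le> 240 * exp (2 * \<bar>\<kappa>\<bar> + 1/2) * exp (- 2 * \<bar>x\<bar>)"
proof -
  have "(ycurve \<mu> \<kappa> x)^2 \<le> (exp (\<bar>\<kappa>\<bar> + \<bar>\<mu>\<bar> - \<bar>x\<bar>))^2"
    using ycurve_le_exp ycurve_bounds(1) by (intro power_mono) (auto intro: less_imp_le)
  also have "\<dots> = exp (2 * \<bar>\<kappa>\<bar> + 2 * \<bar>\<mu>\<bar>) * exp (- 2 * \<bar>x\<bar>)"
    by (simp flip: exp_add exp_double add: algebra_simps)
  also have "\<dots> \<le> exp (2 * \<bar>\<kappa>\<bar> + 1/2) * exp (- 2 * \<bar>x\<bar>)"
    using \<mu> by simp
  finally show ?thesis using abs_II_le[OF \<mu>, of \<kappa> x] by linarith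
qed

lemma isCont_II:
  assumes \<mu>: "\<bar>\<mu>\<bar> < 1"
  shows "isCont (II \<mu> \<kappa>) x"
proof -
  have Y: "\<bar>ycurve \<mu> \<kappa> t\<bar> < 1" for t using ycurve_bounds[of \<mu> \<kappa> t] by auto
  have ff: "isCont (ff \<mu>) x" "isCont (ff' \<mu>) x" "isCont (ff'' \<mu>) x"
    using ff_has_derivative ff'_has_derivative ff''_has_derivative \<mu> by (blast intro: DERIV_isCont)+
  have ff''': "isCont (ff''' \<mu>) x"
    unfolding ff'''_def using one_plus_mult_cos_pos[OF \<mu>, of x] by (auto intro!: continuous_intros)
  have y: "isCont (ycurve \<mu> \<kappa>) x" by (rule DERIV_isCont[OF ycurve_has_derivative])
  then have gg: "isCont (\<lambda>t. gg (ycurve \<mu> \<kappa> t)) x" "isCont (\<lambda>t. gg' (ycurve \<mu> \<kappa> t)) x"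
    "isCont (\<lambda>t. gg'' (ycurve \<mu> \<kappa> t)) x" "isCont (\<lambda>t. gg''' (ycurve \<mu> \<kappa> t)) x"
    unfolding gg_def gg'_def gg''_def gg'''_def by (auto intro!: continuous_intros)
  have lam: "isCont (\<lambda>t. lam \<mu> t (ycurve \<mu> \<kappa> t)) x" "lam \<mu> x (ycurve \<mu> \<kappa> x) \<noteq> 0"
    unfolding lam_def using ff gg lam_pos[OF \<mu>, of "ycurve \<mu> \<kappa> x" x] Y[of x]
    by (auto simp: lam_def intro!: continuous_intros)
  have "isCont (\<lambda>t. KK_x \<mu> t (ycurve \<mu> \<kappa> t)) x" "isCont (\<lambda>t. KK_y \<mu> t (ycurve \<mu> \<kappa> t)) x"
    unfolding KK_x_eq[OF \<mu> Y] KK_y_eq[OF \<mu> Y] using ff ff''' gg lam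
    by (auto intro!: isCont_conformal_curvature_deriv continuous_intros)
  moreover have "isCont (deriv (ycurve \<mu> \<kappa>)) x"
    unfolding DERIV_imp_deriv[OF ycurve_has_derivative, abs_def] using y
    by (auto intro!: continuous_intros)
  ultimately show ?thesis
    unfolding II_def[abs_def] using ff gg by (auto intro!: continuous_intros)
qed

theorem mainTheorem9:
  fixes \<mu> \<kappa> L :: real
  assumes "0 < \<mu>" and "\<mu> < 1/4" and "L > 0"
  shows "set_integrable lborel {..-L} (II \<mu> \<kappa>)
       \<and> set_integrable lborel {L..} (II \<mu> \<kappa>)
       \<and> \<bar>BB \<mu> L \<kappa>\<bar> \<le> 1200 * (1 + 2 * exp (2 * \<bar>\<kappa>\<bar>)) * (gam L)^2"
proof -
  have \<mu>: "\<bar>\<mu>\<bar> \<le> 1/4" using assms by simp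
  have "continuous_on UNIV (II \<mu> \<kappa>)"
    using isCont_II \<mu> by (intro continuous_at_imp_continuous_on) auto
  from set_integrable_exp_tails[OF this _ _ abs_II_le_exp[OF \<mu>], of L] assms(3)
  have tails: "set_integrable lborel {..-L} (II \<mu> \<kappa>)" "set_integrable lborel {L..} (II \<mu> \<kappa>)"
    "\<bar>BB \<mu> L \<kappa>\<bar> \<le> 240 * exp (2 * \<bar>\<kappa>\<bar>) * (exp (1/2) * exp (- 2 * L))"
    unfolding BB_def by (simp_all add: exp_add mult_ac)
  note tails(3)
  also have "240 * exp (2 * \<bar>\<kappa>\<bar>) * (exp (1/2) * exp (- 2 * L))
      \<le> 240 * exp (2 * \<bar>\<kappa>\<bar>) * (2 * (4 * (gam L)^2))"
    using exp_half_le2 exp_neg_le_gam_sq[of L] assms(3) by (intro mult_left_mono mult_mono) auto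
  also have "\<dots> \<le> 1200 * (1 + 2 * exp (2 * \<bar>\<kappa>\<bar>)) * (gam L)^2"
    by (simp add: algebra_simps)
  finally show ?thesis using tails(1,2) by blast
qed

end
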